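(* There exists a constant $C \geq 1$ such that \[ \sum_{q=1}^Q \mathbf{1}_{R_q} \leq C K\Bigl(1 \vee \frac{\|x\|_\infty}{t}\Bigr). \]
   Context: Let $d \geq 2$. Let $\omega=(\omega(x))_{x \in \mathbb{Z}^d}$ be independent random variables with a common law on $\mathbb{N}_0$, not concentrated at $0$. Independently of $\omega$, let $(S_k(x,\ell))_{k \geq 0}$, $x \in \mathbb{Z}^d$, $\ell \in \mathbb{N}$, be independent simple random walks on $\mathbb{Z}^d$ with $S_0(x,\ell)=x$. For $x,y \in \mathbb{Z}^d$ let $\tau(x,y):=\inf\{k \geq 0: S_k(x,\ell)=y \text{ for some } 1 \leq \ell \leq \omega(x)\}$ ($:=\infty$ if $\omega(x)=0$). Let $C_0\in(0,\infty)$ be a constant for which there are $0<c,c'<\infty$, $0<a<1$ with $P(T(0,x)\ge s\mid\omega(0)\ge 1)\le c\,e^{-c's^{a}}$ for all $x\in\mathbb{Z}^d$ and $s\ge C_0\|x\|_1$, where $T(x,y):=\inf\{\sum_{i=0}^{m-1}\tau(x_i,x_{i+1}): m \geq 1,\ x=x_0,\dots,x_m=y\}$. Fix $\gamma>0$ and a constant $K>d(C_0+\gamma+1)$. For $t>0$ define $\sigma_t(x,y)$ by: $\sigma_t(x,y):=4Kt$ if $\|x-y\|_\infty\le t$ and $\tau(x,y)>4Kt$; $\sigma_t(x,y):=4K\|x-y\|_\infty$ if $\|x-y\|_\infty>t$; $\sigma_t(x,y):=\tau(x,y)$ otherwise; and $T_t(x,y):=\inf\{\sum_{i=0}^{m-1}\sigma_t(x_i,x_{i+1}):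 m\ge 1,\ x=x_0,\dots,x_m=y\}$. Fix $x\in\mathbb{Z}^d\setminus\{0\}$ and $t>0$. Tile $\mathbb{Z}^d$ with copies $\Lambda_q$, $q\in\mathbb{N}$, of $(-t/2,t/2]^d$, each centered at a point of $\mathbb{Z}^d$, so that each site lies in exactly one box, numbered so that $T_t(0,x)$ depends only on the configuration ($\omega$ and the walks started) in $\Lambda_1,\dots,\Lambda_Q$ for some finite $Q$. Let $\pi_t(0,x)=(0=x_0,x_1,\dots,x_m=x)$ be a sequence with $T_t(0,x)=\sum_{i=0}^{m-1}\sigma_t(x_i,x_{i+1})$, chosen by a deterministic tie-breaking rule, and let $R_q$ be the event that $\pi_t(0,x)$ intersects $\Lambda_q$. The constant $C$ does not depend on $x$, $t$ or the configuration. *)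

theory Defs
  imports "HOL-Analysis.Analysis"
begin

text \<open>Sites of Z^d are vectors of type int^'d (dimension d = CARD('d)).\<close>

definition norm_inf :: "int ^ 'd \<Rightarrow> real" where
  "norm_inf v = real_of_int (Max (range (\<lambda>i. \<bar>v $ i\<bar>)))"

definition norm1 :: "int ^ 'd \<Rightarrow> int" where
  "norm1 v = (\<Sum>i\<in>UNIV. \<bar>v $ i\<bar>)"

text \<open>A realisation of the walks: S x l is the path (S_k(x,l))_k; nearest-neighbour paths started at x.\<close>
definition srw_paths :: "(int ^ 'd \<Rightarrow> nat \<Rightarrow> nat \<Rightarrow> int ^ 'd) \<Rightarrow> bool" where
  "srw_paths S \<longleftrightarrow> (\<forall>x l. 1 \<le> l \<longrightarrow>
      S x l 0 = x \<and> (\<forall>k. norm1 (S x l (Suc k) - S x l k) = 1))"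

text \<open>tau(x,y) = inf{k >= 0 : S_k(x,l) = y for some 1 <= l <= omega(x)}, infinity if empty.\<close>
definition tau :: "(int ^ 'd \<Rightarrow> nat) \<Rightarrow> (int ^ 'd \<Rightarrow> nat \<Rightarrow> nat \<Rightarrow> int ^ 'd)
    \<Rightarrow> int ^ 'd \<Rightarrow> int ^ 'd \<Rightarrow> ereal" where
  "tau \<omega> S x y = Inf ((\<lambda>k. ereal (real k)) ` {k. \<exists>l. 1 \<le> l \<and> l \<le> \<omega> x \<and> S x l k = y})"

definition sigma_t :: "real \<Rightarrow> real \<Rightarrow> (int ^ 'd \<Rightarrow> nat) \<Rightarrow> (int ^ 'd \<Rightarrow> nat \<Rightarrow> nat \<Rightarrow> int ^ 'd)
    \<Rightarrow> int ^ 'd \<Rightarrow> int ^ 'd \<Rightarrow> real" where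
  "sigma_t K t \<omega> S x y =
     (if norm_inf (x - y) \<le> t \<and> tau \<omega> S x y > ereal (4 * K * t) then 4 * K * t
      else if norm_inf (x - y) > t then 4 * K * norm_inf (x - y)
      else real_of_ereal (tau \<omega> S x y))"

text \<open>A path x = x_0, ..., x_m = y with m >= 1, as a list of length m+1.\<close>
definition is_path :: "int ^ 'd \<Rightarrow> int ^ 'd \<Rightarrow> (int ^ 'd) list \<Rightarrow> bool" where
  "is_path x y p \<longleftrightarrow> 2 \<le> length p \<and> hd p = x \<and> last p = y"

definition path_cost :: "real \<Rightarrow> real \<Rightarrow> (int ^ 'd \<Rightarrow> nat) \<Rightarrow> (int ^ 'd \<Rightarrow> nat \<Rightarrow> nat \<Rightarrow> int ^ 'd)
    \<Rightarrow> (int ^ 'd) list \<Rightarrow> real" where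
  "path_cost K t \<omega> S p = sum_list (map (\<lambda>(a, b). sigma_t K t \<omega> S a b) (zip p (tl p)))"

definition T_t :: "real \<Rightarrow> real \<Rightarrow> (int ^ 'd \<Rightarrow> nat) \<Rightarrow> (int ^ 'd \<Rightarrow> nat \<Rightarrow> nat \<Rightarrow> int ^ 'd)
    \<Rightarrow> int ^ 'd \<Rightarrow> int ^ 'd \<Rightarrow> real" where
  "T_t K t \<omega> S x y = Inf {path_cost K t \<omega> S p | p. is_path x y p}"

definition optimal_path :: "real \<Rightarrow> real \<Rightarrow> (int ^ 'd \<Rightarrow> nat) \<Rightarrow> (int ^ 'd \<Rightarrow> nat \<Rightarrow> nat \<Rightarrow> int ^ 'd)
    \<Rightarrow> int ^ 'd \<Rightarrow> int ^ 'd \<Rightarrow> (int ^ 'd) list \<Rightarrow> bool" where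
  "optimal_path K t \<omega> S x y p \<longleftrightarrow> is_path x y p \<and> path_cost K t \<omega> S p = T_t K t \<omega> S x y"

definition in_box :: "real \<Rightarrow> int ^ 'd \<Rightarrow> int ^ 'd \<Rightarrow> bool" where
  "in_box t c z \<longleftrightarrow> (\<forall>i. - t / 2 < real_of_int (z $ i - c $ i) \<and> real_of_int (z $ i - c $ i) \<le> t / 2)"

definition is_tiling :: "real \<Rightarrow> (nat \<Rightarrow> int ^ 'd) \<Rightarrow> bool" where
  "is_tiling t c \<longleftrightarrow> (\<forall>z. \<exists>!q. 1 \<le> q \<and> in_box t (c q) z)"

end

theory Submission
  imports Defs
begin

text \<open>
  The sup-distance never exceeds \<open>\<sigma>\<^sub>t\<close> (a walk moves by one lattice step at a time, and
  \<open>K \<ge> 1\<close>), so the sup-length of the optimal path is at most its cost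
  \<open>T\<^sub>t(0,x) \<le> \<sigma>\<^sub>t(0,x) \<le> 4K max(t, \<parallel>x\<parallel>\<^sub>\<infinity>)\<close>. A path of length \<open>L\<close> is covered greedily by at
  most \<open>1 + L/t\<close> sup-balls of radius \<open>t\<close>, and each such ball meets at most \<open>7\<^sup>d\<close> boxes of the
  tiling: box centres meeting the ball lie within \<open>3t/2\<close> of its centre, and distinct
  centres differ by at least \<open>t/2\<close> in some coordinate. Hence \<open>C = 5 \<cdot> 7\<^sup>d\<close> works.
\<close>

lemma norm_inf_attained: "\<exists>i. norm_inf (v::int^'d) = real_of_int \<bar>v $ i\<bar>"
proof -
  have "Max (range (\<lambda>i. \<bar>v $ i\<bar>)) \<in> range (\<lambda>i. \<bar>v $ i\<bar>)"
    by (rule Max_in) auto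
  then obtain i where "Max (range (\<lambda>i. \<bar>v $ i\<bar>)) = \<bar>v $ i\<bar>" by blast
  then show ?thesis unfolding norm_inf_def by (intro exI[of _ i]) simp
qed

lemma abs_component_le_norm_inf: "real_of_int \<bar>(v::int^'d) $ i\<bar> \<le> norm_inf v"
proof -
  have "\<bar>v $ i\<bar> \<le> Max (range (\<lambda>i. \<bar>v $ i\<bar>))" by (rule Max_ge) auto
  then show ?thesis unfolding norm_inf_def by linarith
qed

lemma norm_inf_nonneg: "0 \<le> norm_inf (v::int^'d)"
  by (metis norm_inf_attained abs_ge_zero of_int_0_le_iff)

lemma norm_inf_zero [simp]: "norm_inf (0::int^'d) = 0"
  unfolding norm_inf_def by simp

lemma norm_inf_minus [simp]: "norm_inf (- (v::int^'d)) = norm_inf v"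
  unfolding norm_inf_def by simp

lemma norm_inf_minus_commute: "norm_inf ((a::int^'d) - b) = norm_inf (b - a)"
  by (metis minus_diff_eq norm_inf_minus)

lemma norm_inf_triangle: "norm_inf ((a::int^'d) - c) \<le> norm_inf (a - b) + norm_inf (b - c)"
proof -
  obtain i where i: "norm_inf (a - c) = real_of_int \<bar>(a - c) $ i\<bar>"
    using norm_inf_attained by blast
  have "\<bar>(a - c) $ i\<bar> \<le> \<bar>(a - b) $ i\<bar> + \<bar>(b - c) $ i\<bar>" by simp
  then show ?thesis
    using i abs_component_le_norm_inf[of "a - b" i] abs_component_le_norm_inf[of "b - c" i]
    by linarith
qed

lemma norm_inf_le_norm1: "norm_inf (v::int^'d) \<le> real_of_int (norm1 v)"
proof -
  obtain i where "norm_inf v = real_of_int \<bar>v $ i\<bar>" using norm_inf_attained by blast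
  moreover have "\<bar>v $ i\<bar> \<le> norm1 v" unfolding norm1_def by (rule member_le_sum) auto
  ultimately show ?thesis by simp
qed

lemma norm1_triangle: "norm1 ((a::int^'d) + b) \<le> norm1 a + norm1 b"
  unfolding norm1_def by (simp add: sum.distrib[symmetric] sum_mono abs_triangle_ineq)

lemma srw_paths_norm1_displacement:
  assumes "srw_paths S" "1 \<le> l"
  shows "norm1 (S x l k - x) \<le> int k"
proof (induction k)
  case 0
  then show ?case using assms unfolding srw_paths_def norm1_def by simp
next
  case (Suc k)
  have "S x l (Suc k) - x = (S x l (Suc k) - S x l k) + (S x l k - x)" by simp
  then have "norm1 (S x l (Suc k) - x) \<le> norm1 (S x l (Suc k) - S x l k) + norm1 (S x l k - x)"
    by (metis norm1_triangle)
  moreover have "norm1 (S x l (Suc k) - S x l k) = 1"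
    using assms unfolding srw_paths_def by blast
  ultimately show ?case using Suc by simp
qed

lemma norm_inf_le_tau:
  assumes "srw_paths S"
  shows "ereal (norm_inf (a - b)) \<le> tau \<omega> S a b"
  unfolding tau_def
proof (rule Inf_greatest)
  fix z assume "z \<in> (\<lambda>k. ereal (real k)) ` {k. \<exists>l. 1 \<le> l \<and> l \<le> \<omega> a \<and> S a l k = b}"
  then obtain k l where z: "z = ereal (real k)" "1 \<le> l" "S a l k = b" by auto
  have "norm1 (b - a) \<le> int k"
    using srw_paths_norm1_displacement[OF assms z(2), of a k] z(3) by simp
  then have "norm_inf (b - a) \<le> real k" using norm_inf_le_norm1[of "b - a"] by linarith
  then show "ereal (norm_inf (a - b)) \<le> z" using z(1) norm_inf_minus_commute[of a b] by simp
qed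

lemma tau_nonneg: "0 \<le> tau \<omega> S a b"
  unfolding tau_def by (rule Inf_greatest) auto

lemma norm_inf_le_sigma_t:
  assumes S: "srw_paths S" and K: "1 \<le> K" and t: "0 < t"
  shows "norm_inf (a - b) \<le> sigma_t K t \<omega> S a b"
proof -
  have tau: "ereal (norm_inf (a - b)) \<le> tau \<omega> S a b" by (rule norm_inf_le_tau[OF S])
  have "norm_inf (a - b) \<le> 4 * K * t" if "norm_inf (a - b) \<le> t"
    using that mult_right_mono[of 1 "4 * K" t] K t by linarith
  moreover have "norm_inf (a - b) \<le> 4 * K * norm_inf (a - b)"
    using mult_right_mono[of 1 "4 * K" "norm_inf (a - b)"] K norm_inf_nonneg[of "a - b"] by linarith
  moreover have "norm_inf (a - b) \<le> real_of_ereal (tau \<omega> S a b)"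
    if "tau \<omega> S a b \<le> ereal (4 * K * t)"
    using tau that by (cases "tau \<omega> S a b") auto
  ultimately show ?thesis unfolding sigma_t_def by (auto simp: not_less)
qed

lemma sigma_t_nonneg:
  assumes "1 \<le> K" "0 < t"
  shows "0 \<le> sigma_t K t \<omega> S a b"
  unfolding sigma_t_def using assms norm_inf_nonneg[of "a - b"] tau_nonneg[of \<omega> S a b]
  by (auto simp: real_of_ereal_pos)

lemma sigma_t_le:
  assumes K: "1 \<le> K" and t: "0 < t"
  shows "sigma_t K t \<omega> S a b \<le> 4 * K * max t (norm_inf (a - b))"
proof -
  have "real_of_ereal (tau \<omega> S a b) \<le> 4 * K * t" if "tau \<omega> S a b \<le> ereal (4 * K * t)"
    using that tau_nonneg[of \<omega> S a b] K t by (cases "tau \<omega> S a b") auto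
  moreover have "4 * K * t \<le> 4 * K * max t (norm_inf (a - b))"
    "4 * K * norm_inf (a - b) \<le> 4 * K * max t (norm_inf (a - b))" using K by auto
  ultimately show ?thesis unfolding sigma_t_def by (auto simp: not_less)
qed

lemma T_t_le_sigma_t:
  assumes "1 \<le> K" "0 < t"
  shows "T_t K t \<omega> S a b \<le> sigma_t K t \<omega> S a b"
proof -
  have "bdd_below {path_cost K t \<omega> S p | p. is_path a b p}"
    unfolding bdd_below_def path_cost_def
    by (intro exI[of _ 0]) (auto intro!: sum_list_nonneg sigma_t_nonneg[OF assms])
  moreover have "is_path a b [a, b]" unfolding is_path_def by simp
  ultimately have "T_t K t \<omega> S a b \<le> path_cost K t \<omega> S [a, b]"
    unfolding T_t_def by (intro cInf_lower) auto
  then show ?thesis unfolding path_cost_def by simp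
qed

definition polygonal_length :: "('a \<Rightarrow> 'a \<Rightarrow> real) \<Rightarrow> 'a list \<Rightarrow> real" where
  "polygonal_length D p = sum_list (map (\<lambda>(a, b). D a b) (zip p (tl p)))"

lemma polygonal_length_Cons_Cons [simp]:
  "polygonal_length D (v # u # r) = D v u + polygonal_length D (u # r)"
  unfolding polygonal_length_def by simp

lemma polygonal_length_singleton [simp]: "polygonal_length D [v] = 0"
  unfolding polygonal_length_def by simp

lemma path_cost_eq_polygonal_length: "path_cost K t \<omega> S = polygonal_length (sigma_t K t \<omega> S)"
  unfolding path_cost_def polygonal_length_def by (rule ext) simp

text \<open>
  Greedy covering, generalised for the induction: the first centre \<open>a\<close> is already chosen
  and lies within \<open>s\<close> of the first vertex \<open>v\<close>.
\<close>

lemma greedy_cover_from: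
  assumes refl: "\<And>x. D x x = 0" and triangle: "\<And>x y z. D x z \<le> D x y + D y z"
    and nonneg: "\<And>x y. 0 \<le> D x y" and s: "0 < s"
  shows "D a v \<le> s \<Longrightarrow> \<exists>A. finite A \<and> a \<in> A \<and>
     real (card A) \<le> 1 + (D a v + polygonal_length D (v # p)) / s \<and>
     (\<forall>z\<in>set (v # p). \<exists>b\<in>A. D b z \<le> s)"
proof (induction p arbitrary: v a)
  case Nil
  have "1 \<le> 1 + D a v / s" using nonneg[of a v] s by simp
  then show ?case using Nil by (intro exI[of _ "{a}"]) auto
next
  case (Cons u r)
  have au: "D a u \<le> D a v + D v u" by (rule triangle)
  show ?case
  proof (cases "D a u \<le> s")
    case True
    then obtain A where A: "finite A" "a \<in> A"
      "real (card A) \<le> 1 + (D a u + polygonal_length D (u # r)) / s"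
      "\<forall>z\<in>set (u # r). \<exists>b\<in>A. D b z \<le> s"
      using Cons.IH by blast
    have "(D a u + polygonal_length D (u # r)) / s \<le> (D a v + polygonal_length D (v # u # r)) / s"
      using au s by (simp add: divide_right_mono)
    then have "real (card A) \<le> 1 + (D a v + polygonal_length D (v # u # r)) / s"
      using A(3) by linarith
    then show ?thesis using A Cons.prems by (intro exI[of _ A]) auto
  next
    case False
    obtain A where A: "finite A" "u \<in> A"
      "real (card A) \<le> 1 + (D u u + polygonal_length D (u # r)) / s"
      "\<forall>z\<in>set (u # r). \<exists>b\<in>A. D b z \<le> s"
      using Cons.IH[of u u] refl[of u] s by auto
    have "1 < (D a v + D v u) / s" using False au s by simp
    moreover have "real (card (insert a A)) \<le> real (card A) + 1"
      using A(1) by (simp add: card_insert_if)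
    ultimately have "real (card (insert a A)) \<le> 1 + (D a v + polygonal_length D (v # u # r)) / s"
      using A(3) refl[of u] s by (simp add: add_divide_distrib)
    then show ?thesis using A Cons.prems by (intro exI[of _ "insert a A"]) auto
  qed
qed

lemma greedy_cover:
  assumes "\<And>x. D x x = 0" "\<And>x y z. D x z \<le> D x y + D y z" "\<And>x y. 0 \<le> D x y"
    and "0 < s" and "p \<noteq> []"
  shows "\<exists>A. finite A \<and> real (card A) \<le> 1 + polygonal_length D p / s \<and>
    (\<forall>z\<in>set p. \<exists>b\<in>A. D b z \<le> s)"
proof -
  obtain v r where p: "p = v # r" using \<open>p \<noteq> []\<close> by (cases p) auto
  have "D v v \<le> s" using assms(1,4) by simp
  from greedy_cover_from[of D s v v r, OF assms(1-4) this] show ?thesis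
    unfolding p using assms(1) by auto
qed

lemma abs_diff_less_if_floor_divide_eq:
  fixes X Y s :: real
  assumes "0 < s" and "\<lfloor>X / s\<rfloor> = \<lfloor>Y / s\<rfloor>"
  shows "\<bar>X - Y\<bar> < s"
proof -
  have "\<bar>X / s - Y / s\<bar> < 1"
    using assms(2) by (smt (verit) of_int_floor_le real_of_int_floor_add_one_gt)
  moreover have "X / s - Y / s = (X - Y) / s" by (simp add: diff_divide_distrib)
  ultimately have "\<bar>X - Y\<bar> / s < 1" using assms(1) by (simp add: abs_divide)
  then show ?thesis using assms(1) by (simp add: pos_divide_less_eq)
qed

lemma tiling_centres_eq:
  assumes "is_tiling t c" "0 < t" "1 \<le> q" "1 \<le> q'"
    and "\<And>i. \<bar>real_of_int (c q' $ i - c q $ i)\<bar> < t / 2"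
  shows "q = q'"
proof -
  have "in_box t (c q) (c q')"
    unfolding in_box_def
  proof
    fix i
    show "- t / 2 < real_of_int (c q' $ i - c q $ i) \<and> real_of_int (c q' $ i - c q $ i) \<le> t / 2"
      using assms(5)[of i] unfolding abs_less_iff by linarith
  qed
  moreover have "in_box t (c q') (c q')" using assms(2) unfolding in_box_def by simp
  ultimately show ?thesis using assms(1,3,4) unfolding is_tiling_def by blast
qed

lemma tile_centre_near_ball:
  assumes "0 < t" "norm_inf (b - z) \<le> t" "in_box t (c q) z"
  shows "\<bar>real_of_int (c q $ i - b $ i) / (t / 2)\<bar> \<le> 3"
proof -
  have "\<bar>real_of_int (b $ i - z $ i)\<bar> \<le> t"
    using abs_component_le_norm_inf[of "b - z" i] assms(2) by simp
  moreover have "- t / 2 < real_of_int (z $ i - c q $ i)" "real_of_int (z $ i - c q $ i) \<le> t / 2"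
    using assms(3) unfolding in_box_def by auto
  ultimately have "\<bar>real_of_int (c q $ i - b $ i)\<bar> \<le> 3 * (t / 2)"
    unfolding abs_le_iff of_int_diff by linarith
  then have "\<bar>real_of_int (c q $ i - b $ i)\<bar> / (t / 2) \<le> 3"
    using assms(1) by (subst pos_divide_le_eq) auto
  moreover have "\<bar>t / 2\<bar> = t / 2" using assms(1) by simp
  ultimately show ?thesis by (simp only: abs_divide)
qed

text \<open>
  Rounding each coordinate of \<open>c q - b\<close> down to a multiple of \<open>t/2\<close> is injective on the
  tiles meeting the ball and takes values in \<open>{-3..3}\<^sup>d\<close>.
\<close>

lemma tiles_meeting_ball:
  fixes b :: "int ^ 'd"
  assumes tiling: "is_tiling t c" and t: "0 < t"
  defines "H \<equiv> {q. 1 \<le> q \<and> (\<exists>z. norm_inf (b - z) \<le> t \<and> in_box t (c q) z)}"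
  shows "finite H \<and> card H \<le> 7 ^ CARD('d)"
proof -
  define f where "f q = (\<lambda>i. \<lfloor>real_of_int (c q $ i - b $ i) / (t / 2)\<rfloor>)" for q
  define G where "G = (\<Pi>\<^sub>E (i::'d)\<in>UNIV. {-3..3::int})"
  have G: "finite G" "card G = 7 ^ CARD('d)"
    unfolding G_def by (auto simp: card_PiE finite_PiE)
  have "f q \<in> G" if qH: "q \<in> H" for q
  proof -
    have "-3 \<le> f q i \<and> f q i \<le> 3" for i
    proof -
      obtain z where "norm_inf (b - z) \<le> t" "in_box t (c q) z" using qH unfolding H_def by blast
      then have "\<bar>real_of_int (c q $ i - b $ i) / (t / 2)\<bar> \<le> 3"
        by (rule tile_centre_near_ball[OF t])
      moreover have "- 3 \<le> \<lfloor>y\<rfloor> \<and> \<lfloor>y\<rfloor> \<le> 3" if "\<bar>y\<bar> \<le> 3" for y :: real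
        using that by (auto simp: abs_le_iff le_floor_iff floor_le_iff)
      ultimately show ?thesis unfolding f_def by blast
    qed
    then show ?thesis unfolding G_def PiE_UNIV_domain by auto
  qed
  moreover have "inj_on f H"
  proof
    fix q q' assume "q \<in> H" "q' \<in> H" "f q = f q'"
    moreover have "\<bar>real_of_int (c q' $ i - c q $ i)\<bar> < t / 2" for i
    proof -
      have "\<lfloor>real_of_int (c q $ i - b $ i) / (t / 2)\<rfloor> = \<lfloor>real_of_int (c q' $ i - b $ i) / (t / 2)\<rfloor>"
        using \<open>f q = f q'\<close> unfolding f_def by meson
      then have "\<bar>real_of_int (c q $ i - b $ i) - real_of_int (c q' $ i - b $ i)\<bar> < t / 2"
        by (rule abs_diff_less_if_floor_divide_eq[rotated]) (use t in simp)
      then show ?thesis by (simp add: abs_minus_commute)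
    qed
    ultimately show "q = q'"
      using tiling_centres_eq[OF tiling t] unfolding H_def by blast
  qed
  ultimately have "f ` H \<subseteq> G" "inj_on f H" by auto
  then show ?thesis
    using G card_inj_on_le finite_imageD finite_subset by metis
qed

lemma tiles_meeting_covered_set:
  fixes P :: "(int ^ 'd) set"
  assumes "is_tiling t c" "0 < t" "finite A" "\<forall>z\<in>P. \<exists>b\<in>A. norm_inf (b - z) \<le> t"
  shows "card {q \<in> {1..Q}. \<exists>v\<in>P. in_box t (c q) v} \<le> 7 ^ CARD('d) * card A"
proof -
  define H where "H b = {q. 1 \<le> q \<and> (\<exists>z. norm_inf (b - z) \<le> t \<and> in_box t (c q) z)}" for b
  have H: "finite (H b)" "card (H b) \<le> 7 ^ CARD('d)" for b
    using tiles_meeting_ball[OF assms(1,2)] unfolding H_def by blast+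
  have "{q \<in> {1..Q}. \<exists>v\<in>P. in_box t (c q) v} \<subseteq> (\<Union>b\<in>A. H b)"
    using assms(4) unfolding H_def by fastforce
  then have "card {q \<in> {1..Q}. \<exists>v\<in>P. in_box t (c q) v} \<le> card (\<Union>b\<in>A. H b)"
    using assms(3) H(1) by (intro card_mono) auto
  also have "\<dots> \<le> (\<Sum>b\<in>A. card (H b))" by (rule card_UN_le[OF assms(3)])
  also have "\<dots> \<le> (\<Sum>b\<in>A. 7 ^ CARD('d))" by (rule sum_mono) (rule H(2))
  also have "\<dots> = 7 ^ CARD('d) * card A" by simp
  finally show ?thesis .
qed

lemma polygonal_length_mono:
  assumes "\<And>a b. D a b \<le> E a b"
  shows "polygonal_length D p \<le> polygonal_length E p"
  unfolding polygonal_length_def by (rule sum_list_mono) (auto intro: assms)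

lemma optimal_path_norm_inf_length:
  assumes "srw_paths S" "1 \<le> K" "0 < t" "optimal_path K t \<omega> S a b p"
  shows "polygonal_length (\<lambda>u v. norm_inf (u - v)) p \<le> 4 * K * max t (norm_inf (a - b))"
proof -
  have "polygonal_length (\<lambda>u v. norm_inf (u - v)) p \<le> path_cost K t \<omega> S p"
    unfolding path_cost_eq_polygonal_length
    by (rule polygonal_length_mono) (rule norm_inf_le_sigma_t[OF assms(1-3)])
  also have "\<dots> = T_t K t \<omega> S a b" using assms(4) unfolding optimal_path_def by blast
  also have "\<dots> \<le> sigma_t K t \<omega> S a b" by (rule T_t_le_sigma_t[OF assms(2,3)])
  also have "\<dots> \<le> 4 * K * max t (norm_inf (a - b))" by (rule sigma_t_le[OF assms(2,3)])
  finally show ?thesis .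
qed

lemma optimal_path_covered_by_few_balls:
  assumes S: "srw_paths S" and K: "1 \<le> K" and t: "0 < t" and opt: "optimal_path K t \<omega> S a b p"
  shows "\<exists>A. finite A \<and> real (card A) \<le> 5 * K * max 1 (norm_inf (a - b) / t) \<and>
    (\<forall>z\<in>set p. \<exists>c\<in>A. norm_inf (c - z) \<le> t)"
proof -
  let ?L = "polygonal_length (\<lambda>u v. norm_inf (u - v)) p"
  let ?m = "max 1 (norm_inf (a - b) / t)"
  have "p \<noteq> []" using opt unfolding optimal_path_def is_path_def by auto
  then have "\<exists>A. finite A \<and> real (card A) \<le> 1 + ?L / t \<and> (\<forall>z\<in>set p. \<exists>c\<in>A. norm_inf (c - z) \<le> t)"
    by (intro greedy_cover) (use t norm_inf_triangle norm_inf_nonneg in auto)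
  then obtain A where A: "finite A" "\<forall>z\<in>set p. \<exists>c\<in>A. norm_inf (c - z) \<le> t"
    and card_A: "real (card A) \<le> 1 + ?L / t"
    by blast
  have "?L / t \<le> 4 * K * (max t (norm_inf (a - b)) / t)"
    using optimal_path_norm_inf_length[OF S K t opt] t by (simp add: divide_right_mono)
  also have "\<dots> = 4 * K * ?m" using t by (simp add: max_divide_distrib_right)
  finally have "real (card A) \<le> 5 * K * ?m"
    using card_A K mult_mono[of 1 K 1 ?m] by simp
  with A show ?thesis by blast
qed

lemma count_indicator_sum: "(\<Sum>q = 1..Q. if P q then 1 else 0) = real (card {q \<in> {1..(Q::nat)}. P q})"
  by (simp add: sum.If_cases Int_def)

theorem lemma4p4:
  fixes C0 \<gamma> K :: real
  assumes "CARD('d) \<ge> 2"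
    and "0 < C0" and "0 < \<gamma>"
    and "K > real CARD('d) * (C0 + \<gamma> + 1)"
  shows "\<exists>C::real. C \<ge> 1 \<and>
    (\<forall>(\<omega> :: int ^ 'd \<Rightarrow> nat) (S :: int ^ 'd \<Rightarrow> nat \<Rightarrow> nat \<Rightarrow> int ^ 'd)
       (x :: int ^ 'd) (t :: real) (c :: nat \<Rightarrow> int ^ 'd) (Q :: nat) (\<pi> :: (int ^ 'd) list).
       srw_paths S \<longrightarrow> x \<noteq> 0 \<longrightarrow> 0 < t \<longrightarrow> is_tiling t c \<longrightarrow>
       optimal_path K t \<omega> S 0 x \<pi> \<longrightarrow>
       (\<Sum>q = 1..Q. if (\<exists>v\<in>set \<pi>. in_box t (c q) v) then 1 else 0)
         \<le> C * K * max 1 (norm_inf x / t))"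
proof (intro exI[of _ "5 * 7 ^ CARD('d)"] conjI allI impI)
  have "real CARD('d) * (C0 + \<gamma> + 1) \<ge> 2 * 1" using assms(1-3) by (intro mult_mono) auto
  then have K: "1 \<le> K" using assms(4) by linarith
  fix \<omega> S x t Q and c :: "nat \<Rightarrow> int ^ 'd" and \<pi> :: "(int ^ 'd) list"
  assume S: "srw_paths S" and t: "0 < t" and tiling: "is_tiling t c"
    and opt: "optimal_path K t \<omega> S 0 x \<pi>"
  obtain A where A: "finite A" "\<forall>z\<in>set \<pi>. \<exists>b\<in>A. norm_inf (b - z) \<le> t"
    and card_A: "real (card A) \<le> 5 * K * max 1 (norm_inf x / t)"
    using optimal_path_covered_by_few_balls[OF S K t opt] by auto
  have "card {q \<in> {1..Q}. \<exists>v\<in>set \<pi>. in_box t (c q) v} \<le> 7 ^ CARD('d) * card A"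
    by (rule tiles_meeting_covered_set[OF tiling t A])
  then have "real (card {q \<in> {1..Q}. \<exists>v\<in>set \<pi>. in_box t (c q) v}) \<le> real (7 ^ CARD('d) * card A)"
    by (simp only: of_nat_le_iff)
  also have "\<dots> = 7 ^ CARD('d) * real (card A)" by simp
  also have "\<dots> \<le> 7 ^ CARD('d) * (5 * K * max 1 (norm_inf x / t))"
    using card_A by (rule mult_left_mono) simp
  finally show "(\<Sum>q = 1..Q. if (\<exists>v\<in>set \<pi>. in_box t (c q) v) then 1 else 0)
      \<le> 5 * 7 ^ CARD('d) * K * max 1 (norm_inf x / t)"
    unfolding count_indicator_sum by (simp only: mult_ac)
qed (use one_le_power[of "7::real" "CARD('d)"] in linarith)

end
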